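(* Let $(E,j)$, $(\tilde E,\tilde j)$ be soft inductive systems over the same directed set and $T_\bullet$ a uniformly bounded net of bounded linear operators $T_n:E_n\to\tilde E_n$. (1) If $T_\bullet$ maps every $j$-basic net to a $\tilde j$-convergent net, then $T_\bullet$ is $j\tilde j$-convergent. (2) $T_\bullet$ is $j\tilde j$-convergent if and only if $\lim_{n\gg m}\|(\tilde j_{nm}T_m-T_nj_{nm})x_m\|=0$ for every $x_\bullet\in C(E,j)$ (where $x_m$ is the $m$-th entry of $x_\bullet$). (3) If $T_\bullet$ is $j\tilde j$-convergent and $S_\bullet$ is a uniformly bounded $\tilde j\hat j$-convergent net of operators $S_n:\tilde E_n\to\hat E_n$ into a soft inductive system $(\hat E,\hat j)$, then $(S_nT_n)_n$ is $j\hat j$-convergent and $(ST)_\infty=S_\infty T_\infty$.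
   Context: Let $(N,\le)$ be a directed set; $\lim_{n\gg m}a_{nm}:=\lim_m\limsup_n a_{nm}$. A soft inductive system $(E,j)$: Banach spaces $E_n$, linear contractions $j_{nm}:E_m\to E_n$ ($n\ge m$), $j_{nn}=\mathrm{id}$, $j_{nm}=0$ if $n\not\ge m$, with $\lim_{n\gg m}\|(j_{nl}-j_{nm}j_{ml})x_l\|=0$ for all $l,x_l$. Nets $x_\bullet=(x_n)$, $x_n\in E_n$; seminorm $|x_\bullet|=\limsup_n\|x_n\|$. Basic nets $j_{\bullet m}x_m=(j_{nm}x_m)_n$. $C(E,j)$: seminorm closure of the basic nets in the space of uniformly bounded nets; $C_0(E,j)$: nets with $\|x_n\|\to0$; $E_\infty=C(E,j)/C_0(E,j)$. A uniformly bounded net $T_\bullet$ is $j\tilde j$-convergent if $(T_nx_n)\in C(\tilde E,\tilde j)$ for all $x_\bullet\in C(E,j)$; its limit $T_\infty:E_\infty\to\tilde E_\infty$ is defined by $T_\infty(j\text{-}\lim_nx_n)=\tilde j\text{-}\lim_nT_nx_n$. *)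

theory Defs
  imports "HOL-Analysis.Analysis"
begin

definition directed_set :: "('i \<Rightarrow> 'i \<Rightarrow> bool) \<Rightarrow> bool" where
  "directed_set le \<longleftrightarrow> (\<forall>n. le n n) \<and> (\<forall>a b c. le a b \<longrightarrow> le b c \<longrightarrow> le a c)
     \<and> (\<forall>a b. \<exists>c. le a c \<and> le b c)"

definition dir_filter :: "('i \<Rightarrow> 'i \<Rightarrow> bool) \<Rightarrow> 'i filter" where
  "dir_filter le = (INF m. principal {n. le m n})"

text \<open>lim_{n>>m} a_{nm} = 0, i.e. lim_m limsup_n a_{nm} = 0.\<close>
definition lim_gg_zero :: "('i \<Rightarrow> 'i \<Rightarrow> bool) \<Rightarrow> ('i \<Rightarrow> 'i \<Rightarrow> real) \<Rightarrow> bool" where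
  "lim_gg_zero le a \<longleftrightarrow>
     ((\<lambda>m. Limsup (dir_filter le) (\<lambda>n. ereal (a n m))) \<longlongrightarrow> 0) (dir_filter le)"

text \<open>Banach spaces E_n are modelled as closed linear subspaces of one ambient Banach space.\<close>
definition soft_ind_sys ::
  "('i \<Rightarrow> 'i \<Rightarrow> bool) \<Rightarrow> ('i \<Rightarrow> 'a::banach set) \<Rightarrow> ('i \<Rightarrow> 'i \<Rightarrow> 'a \<Rightarrow> 'a) \<Rightarrow> bool" where
  "soft_ind_sys le E j \<longleftrightarrow>
     directed_set le \<and>
     (\<forall>n. subspace (E n) \<and> closed (E n)) \<and>
     (\<forall>n m. le m n \<longrightarrow>
        (\<forall>x\<in>E m. j n m x \<in> E n \<and> norm (j n m x) \<le> norm x) \<and>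
        (\<forall>x\<in>E m. \<forall>y\<in>E m. j n m (x + y) = j n m x + j n m y) \<and>
        (\<forall>c. \<forall>x\<in>E m. j n m (c *\<^sub>R x) = c *\<^sub>R j n m x)) \<and>
     (\<forall>n. \<forall>x\<in>E n. j n n x = x) \<and>
     (\<forall>n m. \<not> le m n \<longrightarrow> (\<forall>x\<in>E m. j n m x = 0)) \<and>
     (\<forall>l. \<forall>x\<in>E l. lim_gg_zero le (\<lambda>n m. norm (j n l x - j n m (j m l x))))"

definition is_net :: "('i \<Rightarrow> 'a set) \<Rightarrow> ('i \<Rightarrow> 'a) \<Rightarrow> bool" where
  "is_net E x \<longleftrightarrow> (\<forall>n. x n \<in> E n)"

definition unif_bounded :: "('i \<Rightarrow> 'a::real_normed_vector) \<Rightarrow> bool" where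
  "unif_bounded x \<longleftrightarrow> (\<exists>B. \<forall>n. norm (x n) \<le> B)"

definition net_seminorm :: "('i \<Rightarrow> 'i \<Rightarrow> bool) \<Rightarrow> ('i \<Rightarrow> 'a::real_normed_vector) \<Rightarrow> ereal" where
  "net_seminorm le x = Limsup (dir_filter le) (\<lambda>n. ereal (norm (x n)))"

definition basic_net :: "('i \<Rightarrow> 'i \<Rightarrow> 'a \<Rightarrow> 'a) \<Rightarrow> 'i \<Rightarrow> 'a \<Rightarrow> ('i \<Rightarrow> 'a)" where
  "basic_net j m xm = (\<lambda>n. j n m xm)"

definition Cnets ::
  "('i \<Rightarrow> 'i \<Rightarrow> bool) \<Rightarrow> ('i \<Rightarrow> 'a::banach set) \<Rightarrow> ('i \<Rightarrow> 'i \<Rightarrow> 'a \<Rightarrow> 'a) \<Rightarrow> ('i \<Rightarrow> 'a) set" where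
  "Cnets le E j = {x. is_net E x \<and> unif_bounded x \<and>
     (\<forall>e>0. \<exists>m. \<exists>xm\<in>E m. net_seminorm le (\<lambda>n. x n - basic_net j m xm n) < ereal e)}"

definition C0nets :: "('i \<Rightarrow> 'i \<Rightarrow> bool) \<Rightarrow> ('i \<Rightarrow> 'a::banach set) \<Rightarrow> ('i \<Rightarrow> 'a) set" where
  "C0nets le E = {x. is_net E x \<and> unif_bounded x \<and>
     ((\<lambda>n. norm (x n)) \<longlongrightarrow> 0) (dir_filter le)}"

text \<open>j-lim_n x_n: the class of x in E_infinity = C(E,j)/C_0(E,j).\<close>
definition jlim ::
  "('i \<Rightarrow> 'i \<Rightarrow> bool) \<Rightarrow> ('i \<Rightarrow> 'a::banach set) \<Rightarrow> ('i \<Rightarrow> 'i \<Rightarrow> 'a \<Rightarrow> 'a) \<Rightarrow> ('i \<Rightarrow> 'a) \<Rightarrow> ('i \<Rightarrow> 'a) set" where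
  "jlim le E j x = {y \<in> Cnets le E j. (\<lambda>n. y n - x n) \<in> C0nets le E}"

definition Einf ::
  "('i \<Rightarrow> 'i \<Rightarrow> bool) \<Rightarrow> ('i \<Rightarrow> 'a::banach set) \<Rightarrow> ('i \<Rightarrow> 'i \<Rightarrow> 'a \<Rightarrow> 'a) \<Rightarrow> ('i \<Rightarrow> 'a) set set" where
  "Einf le E j = jlim le E j ` Cnets le E j"

definition bounded_op_net ::
  "('i \<Rightarrow> 'a::banach set) \<Rightarrow> ('i \<Rightarrow> 'b::banach set) \<Rightarrow> ('i \<Rightarrow> 'a \<Rightarrow> 'b) \<Rightarrow> bool" where
  "bounded_op_net E Et T \<longleftrightarrow>
     (\<forall>n. (\<forall>x\<in>E n. T n x \<in> Et n) \<and>
          (\<forall>x\<in>E n. \<forall>y\<in>E n. T n (x + y) = T n x + T n y) \<and>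
          (\<forall>c. \<forall>x\<in>E n. T n (c *\<^sub>R x) = c *\<^sub>R T n x)) \<and>
     (\<exists>B. \<forall>n. \<forall>x\<in>E n. norm (T n x) \<le> B * norm x)"

definition op_convergent ::
  "('i \<Rightarrow> 'i \<Rightarrow> bool) \<Rightarrow> ('i \<Rightarrow> 'a::banach set) \<Rightarrow> ('i \<Rightarrow> 'i \<Rightarrow> 'a \<Rightarrow> 'a)
    \<Rightarrow> ('i \<Rightarrow> 'b::banach set) \<Rightarrow> ('i \<Rightarrow> 'i \<Rightarrow> 'b \<Rightarrow> 'b) \<Rightarrow> ('i \<Rightarrow> 'a \<Rightarrow> 'b) \<Rightarrow> bool" where
  "op_convergent le E j Et jt T \<longleftrightarrow> bounded_op_net E Et T \<and>
     (\<forall>x\<in>Cnets le E j. (\<lambda>n. T n (x n)) \<in> Cnets le Et jt)"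

definition op_limit ::
  "('i \<Rightarrow> 'i \<Rightarrow> bool) \<Rightarrow> ('i \<Rightarrow> 'b::banach set) \<Rightarrow> ('i \<Rightarrow> 'i \<Rightarrow> 'b \<Rightarrow> 'b)
    \<Rightarrow> ('i \<Rightarrow> 'a \<Rightarrow> 'b) \<Rightarrow> ('i \<Rightarrow> 'a) set \<Rightarrow> ('i \<Rightarrow> 'b) set" where
  "op_limit le Et jt T X = jlim le Et jt (\<lambda>n. T n ((SOME x. x \<in> X) n))"

end

theory Submission imports Defs begin

text \<open>
  Everything rests on a Cauchy-type description of \<open>C(E,j)\<close>: a bounded net \<open>x\<close> lies in
  \<open>C(E,j)\<close> iff \<open>\<parallel>x n - j n m (x m)\<parallel> \<rightarrow> 0\<close> as \<open>n \<gg> m\<close>. Since the \<open>T n\<close> are uniformly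
  Lipschitz with some constant \<open>B\<close>, the quantities \<open>\<parallel>T n (x n) - jt n m (T m (x m))\<parallel>\<close> and
  \<open>\<parallel>jt n m (T m (x m)) - T n (j n m (x m))\<parallel>\<close> differ by at most \<open>B \<parallel>x n - j n m (x m)\<parallel>\<close>,
  which gives (2). For (1), \<open>C(E,j)\<close> is closed for the seminorm and \<open>T\<close> is continuous for it,
  so approximating \<open>x\<close> by basic nets shows \<open>T x \<in> C(Et,jt)\<close>. For (3), \<open>S\<close> maps null nets to
  null nets, so \<open>S\<^sub>\<infinity>\<close> does not depend on the representative chosen.
\<close>

lemma eventually_dir_filter:
  assumes "directed_set le"
  shows "eventually P (dir_filter le) \<longleftrightarrow> (\<exists>m. \<forall>n. le m n \<longrightarrow> P n)"
proof -
  have "eventually P (dir_filter le) = (\<exists>b\<in>UNIV. eventually P (principal {n. le b n}))"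
    unfolding dir_filter_def
  proof (rule eventually_INF_base)
    fix a b :: 'a
    obtain c where "le a c" "le b c" using assms unfolding directed_set_def by blast
    then have "principal {n. le c n} \<le> inf (principal {n. le a n}) (principal {n. le b n})"
      using assms unfolding directed_set_def by (auto simp: inf_principal)
    then show "\<exists>x\<in>UNIV. principal {n. le x n} \<le> inf (principal {n. le a n}) (principal {n. le b n})"
      by blast
  qed auto
  then show ?thesis by (simp add: eventually_principal)
qed

lemma dir_filter_neq_bot: "directed_set le \<Longrightarrow> dir_filter le \<noteq> bot"
  by (auto simp: eventually_False[symmetric] eventually_dir_filter directed_set_def)

subsection \<open>The iterated limit \<open>lim\<^sub>n\<^sub>\<gg>\<^sub>m\<close>\<close>

definition gg_vanishing :: "('i \<Rightarrow> 'i \<Rightarrow> bool) \<Rightarrow> ('i \<Rightarrow> 'i \<Rightarrow> real) \<Rightarrow> bool" where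
  "gg_vanishing le a \<longleftrightarrow> (\<forall>e>0. \<forall>\<^sub>F m in dir_filter le. \<forall>\<^sub>F n in dir_filter le. a n m < e)"

lemma lim_gg_zero_iff_gg_vanishing:
  assumes "directed_set le" and nonneg: "\<And>n m. a n m \<ge> 0"
  shows "lim_gg_zero le a \<longleftrightarrow> gg_vanishing le a"
proof
  assume L: "lim_gg_zero le a"
  show "gg_vanishing le a" unfolding gg_vanishing_def
  proof (intro allI impI)
    fix e :: real assume "e > 0"
    then have "\<forall>\<^sub>F m in dir_filter le. Limsup (dir_filter le) (\<lambda>n. ereal (a n m)) < ereal e"
      using L unfolding lim_gg_zero_def by (intro order_tendstoD(2)) auto
    then show "\<forall>\<^sub>F m in dir_filter le. \<forall>\<^sub>F n in dir_filter le. a n m < e"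
      by eventually_elim (drule Limsup_lessD, auto)
  qed
next
  assume G: "gg_vanishing le a"
  show "lim_gg_zero le a" unfolding lim_gg_zero_def
  proof (rule order_tendstoI)
    fix l :: ereal assume "l < 0"
    have "\<forall>m. 0 \<le> Limsup (dir_filter le) (\<lambda>n. ereal (a n m))"
      using dir_filter_neq_bot[OF assms(1)] nonneg by (auto intro!: le_Limsup)
    then show "\<forall>\<^sub>F m in dir_filter le. l < Limsup (dir_filter le) (\<lambda>n. ereal (a n m))"
      using \<open>l < 0\<close> by (intro always_eventually allI) (meson order.strict_trans2)
  next
    fix u :: ereal assume "0 < u"
    then obtain z where z: "0 < ereal z" "ereal z < u" using ereal_dense2 by blast
    then have "\<forall>\<^sub>F m in dir_filter le. \<forall>\<^sub>F n in dir_filter le. a n m < z"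
      using G unfolding gg_vanishing_def by auto
    then show "\<forall>\<^sub>F m in dir_filter le. Limsup (dir_filter le) (\<lambda>n. ereal (a n m)) < u"
    proof eventually_elim
      case (elim m)
      then have "Limsup (dir_filter le) (\<lambda>n. ereal (a n m)) \<le> ereal z"
        by (intro Limsup_bounded) (auto elim: eventually_mono)
      then show ?case using z by auto
    qed
  qed
qed

lemma gg_vanishing_le_add_scaled:
  assumes a: "gg_vanishing le a" and b: "gg_vanishing le b" and "B > 0"
    and le: "\<And>n m. c n m \<le> b n m + B * a n m"
  shows "gg_vanishing le c"
  unfolding gg_vanishing_def
proof (intro allI impI)
  fix e :: real assume "e > 0"
  then have "\<forall>\<^sub>F m in dir_filter le. \<forall>\<^sub>F n in dir_filter le. a n m < e / (2 * B)"
    and "\<forall>\<^sub>F m in dir_filter le. \<forall>\<^sub>F n in dir_filter le. b n m < e / 2"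
    using a b \<open>B > 0\<close> unfolding gg_vanishing_def by (meson divide_pos_pos half_gt_zero zero_less_mult_iff zero_less_numeral)+
  then show "\<forall>\<^sub>F m in dir_filter le. \<forall>\<^sub>F n in dir_filter le. c n m < e"
  proof eventually_elim
    case (elim m)
    from elim(1,2) show ?case
    proof eventually_elim
      case (elim n)
      then have "B * a n m < e / 2" using \<open>B > 0\<close> by (simp add: field_simps)
      then show ?case using elim(2) le[of n m] by linarith
    qed
  qed
qed

lemma soft_ind_sys_directed: "soft_ind_sys le E j \<Longrightarrow> directed_set le"
  by (simp add: soft_ind_sys_def)

lemma soft_ind_sys_subspace: "soft_ind_sys le E j \<Longrightarrow> subspace (E n)"
  by (simp add: soft_ind_sys_def)

text \<open>No hypothesis \<open>le m n\<close> is needed here and below: otherwise \<open>j n m\<close> vanishes on \<open>E m\<close>.\<close>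

lemma soft_ind_sys_mem: "soft_ind_sys le E j \<Longrightarrow> y \<in> E m \<Longrightarrow> j n m y \<in> E n"
  unfolding soft_ind_sys_def by (metis subspace_0)

lemma soft_ind_sys_norm_le: "soft_ind_sys le E j \<Longrightarrow> y \<in> E m \<Longrightarrow> norm (j n m y) \<le> norm y"
  unfolding soft_ind_sys_def by (metis norm_ge_zero norm_zero)

lemma soft_ind_sys_diff:
  assumes S: "soft_ind_sys le E j" and "a \<in> E m" "b \<in> E m"
  shows "j n m (a - b) = j n m a - j n m b"
proof (cases "le m n")
  case True
  have "(-1) *\<^sub>R b \<in> E m" using soft_ind_sys_subspace[OF S] assms(3) by (simp add: subspace_neg)
  then have "j n m (a + (-1) *\<^sub>R b) = j n m a + j n m ((-1) *\<^sub>R b)"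
    and "j n m ((-1) *\<^sub>R b) = (-1) *\<^sub>R j n m b"
    using assms True unfolding soft_ind_sys_def by blast+
  then show ?thesis by simp
next
  case False
  have "a - b \<in> E m" using soft_ind_sys_subspace[OF S] assms by (simp add: subspace_diff)
  then show ?thesis using assms False unfolding soft_ind_sys_def by simp
qed

lemma soft_ind_sys_gg_vanishing:
  assumes S: "soft_ind_sys le E j" and "y \<in> E l"
  shows "gg_vanishing le (\<lambda>n m. norm (j n l y - j n m (j m l y)))"
  using assms lim_gg_zero_iff_gg_vanishing[OF soft_ind_sys_directed[OF S]]
  unfolding soft_ind_sys_def by simp

lemma bounded_op_net_mem: "bounded_op_net E Et T \<Longrightarrow> x \<in> E n \<Longrightarrow> T n x \<in> Et n"
  by (simp add: bounded_op_net_def)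

lemma bounded_op_net_diff:
  assumes T: "bounded_op_net E Et T" and "subspace (E n)" "a \<in> E n" "b \<in> E n"
  shows "T n (a - b) = T n a - T n b"
proof -
  have "(-1) *\<^sub>R b \<in> E n" using assms by (simp add: subspace_neg)
  then have "T n (a + (-1) *\<^sub>R b) = T n a + T n ((-1) *\<^sub>R b)"
    and "T n ((-1) *\<^sub>R b) = (-1) *\<^sub>R T n b"
    using assms unfolding bounded_op_net_def by blast+
  then show ?thesis by simp
qed

lemma bounded_op_net_bound:
  assumes "bounded_op_net E Et T"
  obtains B where "B > 0" "\<And>n x. x \<in> E n \<Longrightarrow> norm (T n x) \<le> B * norm x"
proof -
  obtain B where B: "\<And>n x. x \<in> E n \<Longrightarrow> norm (T n x) \<le> B * norm x"
    using assms unfolding bounded_op_net_def by blast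
  have "norm (T n x) \<le> (max B 0 + 1) * norm x" if "x \<in> E n" for n x
    using B[OF that] mult_right_mono[of B "max B 0 + 1" "norm x"] by fastforce
  then show ?thesis using that[of "max B 0 + 1"] by auto
qed

lemma bounded_op_net_lipschitz:
  assumes T: "bounded_op_net E Et T" and sub: "\<And>n. subspace (E n)"
  obtains B where "B > 0" "\<And>n x y. x \<in> E n \<Longrightarrow> y \<in> E n \<Longrightarrow> norm (T n x - T n y) \<le> B * norm (x - y)"
proof -
  obtain B where "B > 0" and B: "\<And>n x. x \<in> E n \<Longrightarrow> norm (T n x) \<le> B * norm x"
    using bounded_op_net_bound[OF T] by blast
  moreover have "norm (T n x - T n y) \<le> B * norm (x - y)" if "x \<in> E n" "y \<in> E n" for n x y
    using B[of "x - y" n] bounded_op_net_diff[OF T sub that] sub[of n] that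
    by (simp add: subspace_diff)
  ultimately show ?thesis using that by blast
qed

lemma bounded_op_net_comp:
  assumes T: "bounded_op_net E Et T" and S: "bounded_op_net Et Eh S"
  shows "bounded_op_net E Eh (\<lambda>n. S n \<circ> T n)"
proof -
  obtain B where B: "B > 0" "\<And>n x. x \<in> E n \<Longrightarrow> norm (T n x) \<le> B * norm x"
    using bounded_op_net_bound[OF T] by blast
  obtain B' where B': "B' > 0" "\<And>n x. x \<in> Et n \<Longrightarrow> norm (S n x) \<le> B' * norm x"
    using bounded_op_net_bound[OF S] by blast
  have "norm (S n (T n x)) \<le> (B' * B) * norm x" if "x \<in> E n" for n x
  proof -
    have "norm (S n (T n x)) \<le> B' * norm (T n x)" using B'(2) bounded_op_net_mem[OF T that] .
    also have "\<dots> \<le> B' * (B * norm x)" using B(2)[OF that] B'(1) by (intro mult_left_mono) auto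
    finally show ?thesis by simp
  qed
  moreover have "(\<forall>x\<in>E n. S n (T n x) \<in> Eh n) \<and>
      (\<forall>x\<in>E n. \<forall>y\<in>E n. S n (T n (x + y)) = S n (T n x) + S n (T n y)) \<and>
      (\<forall>c. \<forall>x\<in>E n. S n (T n (c *\<^sub>R x)) = c *\<^sub>R S n (T n x))" for n
    using T S unfolding bounded_op_net_def by simp
  ultimately show ?thesis unfolding bounded_op_net_def comp_def by blast
qed

lemma bounded_op_net_apply:
  assumes T: "bounded_op_net E Et T" and "is_net E x" "unif_bounded x"
  shows "is_net Et (\<lambda>n. T n (x n))" "unif_bounded (\<lambda>n. T n (x n))"
proof -
  obtain B where B: "B > 0" "\<And>n x. x \<in> E n \<Longrightarrow> norm (T n x) \<le> B * norm x"
    using bounded_op_net_bound[OF T] by blast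
  obtain C where C: "\<And>n. norm (x n) \<le> C" using assms(3) unfolding unif_bounded_def by blast
  have "norm (T n (x n)) \<le> B * C" for n
  proof -
    have "norm (T n (x n)) \<le> B * norm (x n)" using B(2) assms(2) unfolding is_net_def by blast
    also have "\<dots> \<le> B * C" using C[of n] B(1) by (intro mult_left_mono) auto
    finally show ?thesis .
  qed
  then show "unif_bounded (\<lambda>n. T n (x n))" unfolding unif_bounded_def by blast
  show "is_net Et (\<lambda>n. T n (x n))"
    using assms(2) bounded_op_net_mem[OF T] unfolding is_net_def by simp
qed

subsection \<open>The space \<open>C(E,j)\<close>\<close>

lemma Cnets_iff_eventually:
  assumes "directed_set le"
  shows "x \<in> Cnets le E j \<longleftrightarrow> is_net E x \<and> unif_bounded x \<and>
     (\<forall>e>0. \<exists>m. \<exists>xm\<in>E m. \<forall>\<^sub>F n in dir_filter le. norm (x n - j n m xm) < e)"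
proof -
  have eventually_if_seminorm: "\<exists>m. \<exists>xm\<in>E m. \<forall>\<^sub>F n in dir_filter le. norm (x n - j n m xm) < e"
    if "\<exists>m. \<exists>xm\<in>E m. net_seminorm le (\<lambda>n. x n - basic_net j m xm n) < ereal e" for e
    using that unfolding net_seminorm_def basic_net_def by (auto dest!: Limsup_lessD) blast
  have seminorm_if_eventually:
    "\<exists>m. \<exists>xm\<in>E m. net_seminorm le (\<lambda>n. x n - basic_net j m xm n) < ereal e"
    if "e > 0" and approx: "\<exists>m. \<exists>xm\<in>E m. \<forall>\<^sub>F n in dir_filter le. norm (x n - j n m xm) < e / 2" for e
  proof -
    obtain m xm where xm: "xm \<in> E m" "\<forall>\<^sub>F n in dir_filter le. norm (x n - j n m xm) < e / 2"
      using approx by blast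
    then have "net_seminorm le (\<lambda>n. x n - basic_net j m xm n) \<le> ereal (e / 2)"
      unfolding net_seminorm_def basic_net_def
      by (intro Limsup_bounded) (auto elim: eventually_mono)
    also have "\<dots> < ereal e" using \<open>e > 0\<close> by simp
    finally show ?thesis using xm by blast
  qed
  have "(\<forall>e>0. \<exists>m. \<exists>xm\<in>E m. net_seminorm le (\<lambda>n. x n - basic_net j m xm n) < ereal e) \<longleftrightarrow>
        (\<forall>e>0. \<exists>m. \<exists>xm\<in>E m. \<forall>\<^sub>F n in dir_filter le. norm (x n - j n m xm) < e)"
    using eventually_if_seminorm seminorm_if_eventually by (meson half_gt_zero)
  then show ?thesis unfolding Cnets_def by blast
qed

lemma Cnets_closed:
  assumes "directed_set le" and "is_net E x" "unif_bounded x"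
    and approx: "\<And>e. e > 0 \<Longrightarrow> \<exists>y\<in>Cnets le E j. \<forall>\<^sub>F n in dir_filter le. norm (x n - y n) < e"
  shows "x \<in> Cnets le E j"
  unfolding Cnets_iff_eventually[OF assms(1)]
proof (intro conjI assms allI impI)
  fix e :: real assume "e > 0"
  then obtain y where y: "y \<in> Cnets le E j" and xy: "\<forall>\<^sub>F n in dir_filter le. norm (x n - y n) < e / 2"
    using approx[of "e / 2"] by auto
  obtain m ym where "ym \<in> E m" and yj: "\<forall>\<^sub>F n in dir_filter le. norm (y n - j n m ym) < e / 2"
    using y \<open>e > 0\<close> unfolding Cnets_iff_eventually[OF assms(1)] by (meson half_gt_zero)
  moreover from xy yj have "\<forall>\<^sub>F n in dir_filter le. norm (x n - j n m ym) < e"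
    by eventually_elim (drule (1) norm_diff_triangle_less, simp)
  ultimately show "\<exists>m. \<exists>xm\<in>E m. \<forall>\<^sub>F n in dir_filter le. norm (x n - j n m xm) < e" by blast
qed

lemma Cnets_gg_vanishing:
  assumes S: "soft_ind_sys le E j" and x: "x \<in> Cnets le E j"
  shows "gg_vanishing le (\<lambda>n m. norm (x n - j n m (x m)))"
  unfolding gg_vanishing_def
proof (intro allI impI)
  have D: "directed_set le" using soft_ind_sys_directed[OF S] .
  fix e :: real assume "e > 0"
  then obtain l y where y: "y \<in> E l" and xy: "\<forall>\<^sub>F n in dir_filter le. norm (x n - j n l y) < e / 3"
    using x unfolding Cnets_iff_eventually[OF D] by (meson divide_pos_pos zero_less_numeral)
  have "\<forall>\<^sub>F m in dir_filter le. \<forall>\<^sub>F n in dir_filter le. norm (j n l y - j n m (j m l y)) < e / 3"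
    using soft_ind_sys_gg_vanishing[OF S y] \<open>e > 0\<close> unfolding gg_vanishing_def
    by (meson divide_pos_pos zero_less_numeral)
  with xy show "\<forall>\<^sub>F m in dir_filter le. \<forall>\<^sub>F n in dir_filter le. norm (x n - j n m (x m)) < e"
  proof eventually_elim
    case (elim m)
    have xm: "x m \<in> E m" using x unfolding Cnets_def is_net_def by blast
    have jy: "j m l y \<in> E m" using soft_ind_sys_mem[OF S y] .
    have tail: "norm (j n m (j m l y) - j n m (x m)) < e / 3" for n
    proof -
      have "j m l y - x m \<in> E m" using jy xm soft_ind_sys_subspace[OF S] by (simp add: subspace_diff)
      then have "norm (j n m (j m l y) - j n m (x m)) \<le> norm (j m l y - x m)"
        using soft_ind_sys_norm_le[OF S] soft_ind_sys_diff[OF S jy xm] by metis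
      then show ?thesis using elim(1) by (simp add: norm_minus_commute)
    qed
    from xy elim(2) show ?case
    proof eventually_elim
      case (elim n)
      have "x n - j n m (x m) =
          (x n - j n l y) + (j n l y - j n m (j m l y)) + (j n m (j m l y) - j n m (x m))"
        by simp
      then have "norm (x n - j n m (x m)) \<le>
          norm (x n - j n l y) + norm (j n l y - j n m (j m l y)) + norm (j n m (j m l y) - j n m (x m))"
        by (metis order_trans[OF norm_triangle_ineq add_right_mono[OF norm_triangle_ineq]])
      then show ?case using elim tail[of n] by linarith
    qed
  qed
qed

lemma Cnets_if_gg_vanishing:
  assumes D: "directed_set le" and "is_net E x" "unif_bounded x"
    and G: "gg_vanishing le (\<lambda>n m. norm (x n - j n m (x m)))"
  shows "x \<in> Cnets le E j"
  unfolding Cnets_iff_eventually[OF D]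
proof (intro conjI assms allI impI)
  fix e :: real assume "e > 0"
  then have "\<forall>\<^sub>F m in dir_filter le. \<forall>\<^sub>F n in dir_filter le. norm (x n - j n m (x m)) < e"
    using G unfolding gg_vanishing_def by blast
  then obtain m where "\<forall>\<^sub>F n in dir_filter le. norm (x n - j n m (x m)) < e"
    using eventually_happens'[OF dir_filter_neq_bot[OF D]] by blast
  moreover have "x m \<in> E m" using \<open>is_net E x\<close> by (simp add: is_net_def)
  ultimately show "\<exists>m. \<exists>xm\<in>E m. \<forall>\<^sub>F n in dir_filter le. norm (x n - j n m xm) < e" by blast
qed

lemma Cnets_iff_gg_vanishing:
  assumes "soft_ind_sys le E j"
  shows "x \<in> Cnets le E j \<longleftrightarrow>
    is_net E x \<and> unif_bounded x \<and> gg_vanishing le (\<lambda>n m. norm (x n - j n m (x m)))"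
  using Cnets_gg_vanishing[OF assms] Cnets_if_gg_vanishing[OF soft_ind_sys_directed[OF assms]]
  unfolding Cnets_def by blast

subsection \<open>Convergence of operator nets\<close>

lemma op_convergent_if_basic_nets:
  assumes SE: "soft_ind_sys le E j" and T: "bounded_op_net E Et T"
    and basic: "\<forall>m. \<forall>xm\<in>E m. (\<lambda>n. T n (basic_net j m xm n)) \<in> Cnets le Et jt"
  shows "op_convergent le E j Et jt T"
  unfolding op_convergent_def
proof (intro conjI T ballI)
  have D: "directed_set le" using soft_ind_sys_directed[OF SE] .
  obtain B where "B > 0" and B: "\<And>n x y. x \<in> E n \<Longrightarrow> y \<in> E n \<Longrightarrow> norm (T n x - T n y) \<le> B * norm (x - y)"
    using bounded_op_net_lipschitz[OF T soft_ind_sys_subspace[OF SE]] by blast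
  fix x assume x: "x \<in> Cnets le E j"
  then have net: "is_net E x" and "unif_bounded x" unfolding Cnets_def by auto
  show "(\<lambda>n. T n (x n)) \<in> Cnets le Et jt"
  proof (rule Cnets_closed[OF D bounded_op_net_apply[OF T net \<open>unif_bounded x\<close>]])
    fix e :: real assume "e > 0"
    then obtain m y where y: "y \<in> E m" and xy: "\<forall>\<^sub>F n in dir_filter le. norm (x n - j n m y) < e / B"
      using x \<open>B > 0\<close> unfolding Cnets_iff_eventually[OF D] by (meson divide_pos_pos)
    from xy have "\<forall>\<^sub>F n in dir_filter le. norm (T n (x n) - T n (j n m y)) < e"
    proof eventually_elim
      case (elim n)
      have "norm (T n (x n) - T n (j n m y)) \<le> B * norm (x n - j n m y)"
        using B net soft_ind_sys_mem[OF SE y] unfolding is_net_def by blast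
      also have "\<dots> < e" using elim \<open>B > 0\<close> by (simp add: field_simps)
      finally show ?case .
    qed
    moreover have "(\<lambda>n. T n (j n m y)) \<in> Cnets le Et jt"
      using basic y unfolding basic_net_def by blast
    ultimately show "\<exists>z\<in>Cnets le Et jt. \<forall>\<^sub>F n in dir_filter le. norm (T n (x n) - z n) < e"
      by (intro bexI[of _ "\<lambda>n. T n (j n m y)"])
  qed
qed

lemma op_convergent_iff_lim_gg_zero:
  assumes SE: "soft_ind_sys le E j" and SEt: "soft_ind_sys le Et jt" and T: "bounded_op_net E Et T"
  shows "op_convergent le E j Et jt T \<longleftrightarrow>
    (\<forall>x\<in>Cnets le E j. lim_gg_zero le (\<lambda>n m. norm (jt n m (T m (x m)) - T n (j n m (x m)))))"
proof -
  obtain B where "B > 0" and B: "\<And>n x y. x \<in> E n \<Longrightarrow> y \<in> E n \<Longrightarrow> norm (T n x - T n y) \<le> B * norm (x - y)"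
    using bounded_op_net_lipschitz[OF T soft_ind_sys_subspace[OF SE]] by blast
  have equiv: "gg_vanishing le (\<lambda>n m. norm (T n (x n) - jt n m (T m (x m)))) \<longleftrightarrow>
      gg_vanishing le (\<lambda>n m. norm (jt n m (T m (x m)) - T n (j n m (x m))))"
    if x: "x \<in> Cnets le E j" for x
  proof -
    define cauchy where "cauchy n m = T n (x n) - jt n m (T m (x m))" for n m
    define defect where "defect n m = jt n m (T m (x m)) - T n (j n m (x m))" for n m
    define a where "a n m = norm (x n - j n m (x m))" for n m
    have sum: "norm (cauchy n m + defect n m) \<le> B * a n m" for n m
      using B x soft_ind_sys_mem[OF SE] unfolding cauchy_def defect_def a_def Cnets_def is_net_def
      by simp
    have cauchy_le: "norm (cauchy n m) \<le> norm (defect n m) + B * a n m" for n m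
      using norm_triangle_ineq4[of "cauchy n m + defect n m" "defect n m"] sum[of n m] by simp
    have defect_le: "norm (defect n m) \<le> norm (cauchy n m) + B * a n m" for n m
      using norm_triangle_ineq4[of "cauchy n m + defect n m" "cauchy n m"] sum[of n m] by simp
    have a: "gg_vanishing le a" unfolding a_def by (rule Cnets_gg_vanishing[OF SE x])
    have "gg_vanishing le (\<lambda>n m. norm (cauchy n m)) \<longleftrightarrow> gg_vanishing le (\<lambda>n m. norm (defect n m))"
      using gg_vanishing_le_add_scaled[OF a _ \<open>B > 0\<close> cauchy_le]
        gg_vanishing_le_add_scaled[OF a _ \<open>B > 0\<close> defect_le] by blast
    then show ?thesis unfolding cauchy_def defect_def .
  qed
  have "op_convergent le E j Et jt T \<longleftrightarrow>
    (\<forall>x\<in>Cnets le E j. gg_vanishing le (\<lambda>n m. norm (T n (x n) - jt n m (T m (x m)))))"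
  proof -
    have "is_net Et (\<lambda>n. T n (x n)) \<and> unif_bounded (\<lambda>n. T n (x n))" if "x \<in> Cnets le E j" for x
      using bounded_op_net_apply[OF T] that unfolding Cnets_def by blast
    then show ?thesis unfolding op_convergent_def Cnets_iff_gg_vanishing[OF SEt] using T by blast
  qed
  also have "\<dots> \<longleftrightarrow> (\<forall>x\<in>Cnets le E j. lim_gg_zero le (\<lambda>n m. norm (jt n m (T m (x m)) - T n (j n m (x m)))))"
    using equiv lim_gg_zero_iff_gg_vanishing[OF soft_ind_sys_directed[OF SE]] by simp
  finally show ?thesis .
qed

subsection \<open>Limit operators\<close>

lemma C0nets_add:
  assumes sub: "\<And>n. subspace (E n)" and u: "u \<in> C0nets le E" and v: "v \<in> C0nets le E"
  shows "(\<lambda>n. u n + v n) \<in> C0nets le E"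
proof -
  obtain Bu Bv where Bu: "\<And>n. norm (u n) \<le> Bu" and Bv: "\<And>n. norm (v n) \<le> Bv"
    using u v unfolding C0nets_def unif_bounded_def by blast
  have "norm (u n + v n) \<le> Bu + Bv" for n
    using norm_triangle_ineq[of "u n" "v n"] Bu[of n] Bv[of n] by linarith
  then have "unif_bounded (\<lambda>n. u n + v n)" unfolding unif_bounded_def by blast
  moreover have "is_net E (\<lambda>n. u n + v n)"
    using u v sub unfolding C0nets_def is_net_def by (simp add: subspace_add)
  moreover have lim: "((\<lambda>n. norm (u n) + norm (v n)) \<longlongrightarrow> 0) (dir_filter le)"
    using tendsto_add[of "\<lambda>n. norm (u n)" 0 _ "\<lambda>n. norm (v n)" 0] u v unfolding C0nets_def by simp
  have "((\<lambda>n. norm (u n + v n)) \<longlongrightarrow> 0) (dir_filter le)"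
    by (rule tendsto_sandwich[OF _ _ tendsto_const lim]) (auto intro: always_eventually norm_triangle_ineq)
  ultimately show ?thesis unfolding C0nets_def by blast
qed

lemma C0nets_uminus:
  assumes sub: "\<And>n. subspace (E n)" and u: "u \<in> C0nets le E"
  shows "(\<lambda>n. - u n) \<in> C0nets le E"
  using u sub unfolding C0nets_def is_net_def unif_bounded_def by (auto simp: subspace_neg)

lemma jlim_eq_if_C0nets:
  assumes sub: "\<And>n. subspace (E n)" and d: "(\<lambda>n. u n - v n) \<in> C0nets le E"
  shows "jlim le E j u = jlim le E j v"
proof -
  have "(\<lambda>n. y n - u n) \<in> C0nets le E \<longleftrightarrow> (\<lambda>n. y n - v n) \<in> C0nets le E" for y
  proof
    assume "(\<lambda>n. y n - u n) \<in> C0nets le E"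
    from C0nets_add[OF sub this d] show "(\<lambda>n. y n - v n) \<in> C0nets le E" by simp
  next
    assume "(\<lambda>n. y n - v n) \<in> C0nets le E"
    from C0nets_add[OF sub this C0nets_uminus[OF sub d]] show "(\<lambda>n. y n - u n) \<in> C0nets le E"
      by simp
  qed
  then show ?thesis unfolding jlim_def by blast
qed

lemma mem_jlim_self:
  assumes sub: "\<And>n. subspace (E n)" and x: "x \<in> Cnets le E j"
  shows "x \<in> jlim le E j x"
proof -
  have "(\<lambda>n. x n - x n) \<in> C0nets le E"
    using sub unfolding C0nets_def is_net_def unif_bounded_def by (auto simp: subspace_0)
  then show ?thesis using x unfolding jlim_def by blast
qed

lemma bounded_op_net_C0nets:
  assumes S: "bounded_op_net Et Eh S" and subt: "\<And>n. subspace (Et n)" and subh: "\<And>n. subspace (Eh n)"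
    and a: "\<And>n. a n \<in> Et n" and b: "\<And>n. b n \<in> Et n" and d: "(\<lambda>n. a n - b n) \<in> C0nets le Et"
  shows "(\<lambda>n. S n (a n) - S n (b n)) \<in> C0nets le Eh"
proof -
  obtain B where "B > 0" and B: "\<And>n x y. x \<in> Et n \<Longrightarrow> y \<in> Et n \<Longrightarrow> norm (S n x - S n y) \<le> B * norm (x - y)"
    using bounded_op_net_lipschitz[OF S subt] by blast
  obtain K where K: "\<And>n. norm (a n - b n) \<le> K" using d unfolding C0nets_def unif_bounded_def by blast
  have "norm (S n (a n) - S n (b n)) \<le> B * K" for n
    using B[OF a b, of n] mult_left_mono[OF K[of n], of B] \<open>B > 0\<close> by linarith
  then have "unif_bounded (\<lambda>n. S n (a n) - S n (b n))" unfolding unif_bounded_def by blast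
  moreover have "is_net Eh (\<lambda>n. S n (a n) - S n (b n))"
    unfolding is_net_def using subh bounded_op_net_mem[OF S a] bounded_op_net_mem[OF S b]
    by (simp add: subspace_diff)
  moreover have lim: "((\<lambda>n. B * norm (a n - b n)) \<longlongrightarrow> 0) (dir_filter le)"
    using tendsto_mult_left[of "\<lambda>n. norm (a n - b n)" 0 _ B] d unfolding C0nets_def by simp
  have "((\<lambda>n. norm (S n (a n) - S n (b n))) \<longlongrightarrow> 0) (dir_filter le)"
    by (rule tendsto_sandwich[OF _ _ tendsto_const lim]) (auto intro: always_eventually B a b)
  ultimately show ?thesis unfolding C0nets_def by blast
qed

lemma op_convergent_comp:
  assumes "op_convergent le E j Et jt T" and "op_convergent le Et jt Eh jh S"
  shows "op_convergent le E j Eh jh (\<lambda>n. S n \<circ> T n)"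
  using assms unfolding op_convergent_def by (auto intro: bounded_op_net_comp)

lemma op_limit_comp:
  assumes SE: "soft_ind_sys le E j" and SEt: "soft_ind_sys le Et jt" and SEh: "soft_ind_sys le Eh jh"
    and T: "op_convergent le E j Et jt T" and S: "op_convergent le Et jt Eh jh S"
    and X: "X \<in> Einf le E j"
  shows "op_limit le Eh jh (\<lambda>n. S n \<circ> T n) X = op_limit le Eh jh S (op_limit le Et jt T X)"
proof -
  have subt: "\<And>n. subspace (Et n)" using soft_ind_sys_subspace[OF SEt] .
  have subh: "\<And>n. subspace (Eh n)" using soft_ind_sys_subspace[OF SEh] .
  obtain x where x: "x \<in> Cnets le E j" and X_eq: "X = jlim le E j x" using X unfolding Einf_def by blast
  define x0 where "x0 = (SOME x. x \<in> X)"
  have "x0 \<in> X"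
    unfolding x0_def X_eq by (rule someI[of "\<lambda>x. x \<in> _", OF mem_jlim_self[OF soft_ind_sys_subspace[OF SE] x]])
  then have x0: "x0 \<in> Cnets le E j" unfolding X_eq jlim_def by blast
  then have Tx0: "(\<lambda>n. T n (x0 n)) \<in> Cnets le Et jt" using T unfolding op_convergent_def by blast
  define Y where "Y = jlim le Et jt (\<lambda>n. T n (x0 n))"
  define y0 where "y0 = (SOME y. y \<in> Y)"
  have "y0 \<in> Y" unfolding y0_def Y_def by (rule someI[of "\<lambda>y. y \<in> _", OF mem_jlim_self[OF subt Tx0]])
  then have y0: "y0 n \<in> Et n" and d: "(\<lambda>n. y0 n - T n (x0 n)) \<in> C0nets le Et" for n
    unfolding Y_def jlim_def Cnets_def is_net_def by auto
  have Tx0_mem: "T n (x0 n) \<in> Et n" for n using Tx0 unfolding Cnets_def is_net_def by blast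
  have "bounded_op_net Et Eh S" using S unfolding op_convergent_def by blast
  from bounded_op_net_C0nets[OF this subt subh y0 Tx0_mem d]
  have "jlim le Eh jh (\<lambda>n. S n (T n (x0 n))) = jlim le Eh jh (\<lambda>n. S n (y0 n))"
    by (rule jlim_eq_if_C0nets[OF subh, symmetric])
  then show ?thesis unfolding op_limit_def x0_def[symmetric] Y_def[symmetric] y0_def[symmetric] by simp
qed

theorem mainTheorem9:
  fixes le :: "'i \<Rightarrow> 'i \<Rightarrow> bool"
    and E :: "'i \<Rightarrow> 'a::banach set" and j :: "'i \<Rightarrow> 'i \<Rightarrow> 'a \<Rightarrow> 'a"
    and Et :: "'i \<Rightarrow> 'b::banach set" and jt :: "'i \<Rightarrow> 'i \<Rightarrow> 'b \<Rightarrow> 'b"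
    and T :: "'i \<Rightarrow> 'a \<Rightarrow> 'b"
  assumes "soft_ind_sys le E j" and "soft_ind_sys le Et jt"
    and "bounded_op_net E Et T"
  shows "((\<forall>m. \<forall>xm\<in>E m. (\<lambda>n. T n (basic_net j m xm n)) \<in> Cnets le Et jt)
            \<longrightarrow> op_convergent le E j Et jt T)
       \<and> (op_convergent le E j Et jt T \<longleftrightarrow>
            (\<forall>x\<in>Cnets le E j.
               lim_gg_zero le (\<lambda>n m. norm (jt n m (T m (x m)) - T n (j n m (x m))))))
       \<and> (\<forall>(Eh :: 'i \<Rightarrow> 'c::banach set) (jh :: 'i \<Rightarrow> 'i \<Rightarrow> 'c \<Rightarrow> 'c) (S :: 'i \<Rightarrow> 'b \<Rightarrow> 'c).
            soft_ind_sys le Eh jh \<longrightarrow> op_convergent le E j Et jt T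
            \<longrightarrow> op_convergent le Et jt Eh jh S \<longrightarrow>
              op_convergent le E j Eh jh (\<lambda>n. S n \<circ> T n) \<and>
              (\<forall>X\<in>Einf le E j.
                 op_limit le Eh jh (\<lambda>n. S n \<circ> T n) X
                   = op_limit le Eh jh S (op_limit le Et jt T X)))"
  using op_convergent_if_basic_nets[OF assms(1,3)] op_convergent_iff_lim_gg_zero[OF assms]
    op_convergent_comp op_limit_comp[OF assms(1,2)]
  by blast

end
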